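(* Let $q_1,\dots,q_8$ be the eight points $(\pm1,\pm1,\pm1)$ of $\mathbb{R}^3$, let $t\in(0,1)$ and $q_{j+8}=tq_j$ ($j=1,\dots,8$), so that these are the vertices of two nested cubes with ratio of edges $t$. Place mass $\mu_1$ at each of $q_1,\dots,q_8$ and mass $\mu_2\neq0$ at each of $q_9,\dots,q_{16}$. Then the configuration is a central configuration if and only if $$\frac{\mu_1}{\mu_2}=-\frac{24c(t)-\frac{\sqrt3t+\sqrt3}{3(t+1)^3}-\frac{3(t+3)}{(3t^2+2t+3)^{3/2}}+\frac{3(t-3)}{(3t^2-2t+3)^{3/2}}-\frac{\sqrt3t-\sqrt3}{3(t-1)^3}}{24c(t)-\frac{\sqrt3}{12}-\frac{3\sqrt2}{8}-\frac34},$$ where $c(t)=-\gamma_0(t)/\gamma_1(t)$ with $$\gamma_1(t)=-\left((2\sqrt3+9\sqrt2+18)t-\frac{72(t^2+6t+1)}{(3t^2+2t+3)^{3/2}}+\frac{72(t^2-6t+1)}{(3t^2-2t+3)^{3/2}}-\frac{8\sqrt3}{t+1}-\frac{8\sqrt3}{t-1}+\frac{2\sqrt3+9\sqrt2+18}{t^2}\right),$$ $$\begin{aligned}\gamma_0(t)=&-\frac{9(3t+1)(t+3)}{(3t^2+2t+3)^3}+\frac{9(3t-1)(t-3)}{(3t^2-2t+3)^3}+\frac{6\sqrt3\sqrt2+12\sqrt3+54\sqrt2+83}{96t^2}\\&-\frac{4\sqrt3}{(3t^2+2t+3)^{3/2}(t+1)}-\frac{2\sqrt3}{(3t^2-2t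+3)^{3/2}(t+1)}-\frac{2\sqrt3}{(3t^2+2t+3)^{3/2}(t-1)}-\frac{4\sqrt3}{(3t^2-2t+3)^{3/2}(t-1)}\\&-\frac{144t}{(3t^2+2t+3)^{3/2}(3t^2-2t+3)^{3/2}}-\frac{1}{3(t+1)^4}+\frac{1}{3(t-1)^4}.\end{aligned}$$
   Context: A configuration $q=(q_1,\dots,q_N)$ of distinct points in $\mathbb{R}^3$ with masses $m_1,\dots,m_N$ is a central configuration if there exists $c\in\mathbb{R}$ such that $\sum_{j\neq i} m_j\left(\frac{1}{|q_j-q_i|^3}-c\right)(q_j-q_i)=0$ for all $i=1,\dots,N$. *)

theory Defs
  imports "HOL-Analysis.Analysis"
begin

definition central_configuration :: "nat \<Rightarrow> (nat \<Rightarrow> real^3) \<Rightarrow> (nat \<Rightarrow> real) \<Rightarrow> bool" where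
  "central_configuration N q m \<longleftrightarrow>
     (\<forall>i<N. \<forall>j<N. i \<noteq> j \<longrightarrow> q i \<noteq> q j) \<and>
     (\<exists>c::real. \<forall>i<N.
        (\<Sum>j\<in>{j. j < N \<and> j \<noteq> i}. (m j * (1 / norm (q j - q i) ^ 3 - c)) *\<^sub>R (q j - q i)) = 0)"

definition cube_vertex :: "nat \<Rightarrow> real^3" where
  "cube_vertex k = vector [(-1) ^ (k mod 2), (-1) ^ ((k div 2) mod 2), (-1) ^ ((k div 4) mod 2)]"

text \<open>Two nested cubes: indices 0..7 are q_1..q_8, indices 8..15 are q_9..q_16 = t q_1..t q_8.\<close>
definition nested_cubes :: "real \<Rightarrow> nat \<Rightarrow> real^3" where
  "nested_cubes t j = (if j < 8 then cube_vertex j else t *\<^sub>R cube_vertex (j - 8))"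

definition nested_masses :: "real \<Rightarrow> real \<Rightarrow> nat \<Rightarrow> real" where
  "nested_masses \<mu>1 \<mu>2 j = (if j < 8 then \<mu>1 else \<mu>2)"

definition gamma1 :: "real \<Rightarrow> real" where
  "gamma1 t = - ((2 * sqrt 3 + 9 * sqrt 2 + 18) * t
      - 72 * (t^2 + 6*t + 1) / (3*t^2 + 2*t + 3) powr (3/2)
      + 72 * (t^2 - 6*t + 1) / (3*t^2 - 2*t + 3) powr (3/2)
      - 8 * sqrt 3 / (t + 1) - 8 * sqrt 3 / (t - 1)
      + (2 * sqrt 3 + 9 * sqrt 2 + 18) / t^2)"

definition gamma0 :: "real \<Rightarrow> real" where
  "gamma0 t =
      - 9 * (3*t + 1) * (t + 3) / (3*t^2 + 2*t + 3) ^ 3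
      + 9 * (3*t - 1) * (t - 3) / (3*t^2 - 2*t + 3) ^ 3
      + (6 * sqrt 3 * sqrt 2 + 12 * sqrt 3 + 54 * sqrt 2 + 83) / (96 * t^2)
      - 4 * sqrt 3 / ((3*t^2 + 2*t + 3) powr (3/2) * (t + 1))
      - 2 * sqrt 3 / ((3*t^2 - 2*t + 3) powr (3/2) * (t + 1))
      - 2 * sqrt 3 / ((3*t^2 + 2*t + 3) powr (3/2) * (t - 1))
      - 4 * sqrt 3 / ((3*t^2 - 2*t + 3) powr (3/2) * (t - 1))
      - 144 * t / ((3*t^2 + 2*t + 3) powr (3/2) * (3*t^2 - 2*t + 3) powr (3/2))
      - 1 / (3 * (t + 1) ^ 4) + 1 / (3 * (t - 1) ^ 4)"

definition cc :: "real \<Rightarrow> real" where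
  "cc t = - gamma0 t / gamma1 t"

definition mass_ratio :: "real \<Rightarrow> real" where
  "mass_ratio t = - (24 * cc t
        - (sqrt 3 * t + sqrt 3) / (3 * (t + 1) ^ 3)
        - 3 * (t + 3) / (3*t^2 + 2*t + 3) powr (3/2)
        + 3 * (t - 3) / (3*t^2 - 2*t + 3) powr (3/2)
        - (sqrt 3 * t - sqrt 3) / (3 * (t - 1) ^ 3))
      / (24 * cc t - sqrt 3 / 12 - 3 * sqrt 2 / 8 - 3 / 4)"

end

theory Submission
  imports Defs
begin

text \<open>
  The coordinate sign changes, indexed by the cube vertices and acting on the vertex indices by
  XOR, permute each cube and preserve the masses, and the residuals of the central configuration
  equations transform with them. Hence the configuration is central iff the residuals at
  \<open>q\<^sub>1 = (1,1,1)\<close> and at \<open>q\<^sub>9 = t q\<^sub>1\<close> vanish for a common \<open>c\<close>; by the same symmetry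
  both are multiples of \<open>(1,1,1)\<close>, leaving two scalar equations that are linear in \<open>c\<close>.
  Eliminating \<open>c\<close> gives a linear relation \<open>\<mu>\<^sub>1 a(t) + \<mu>\<^sub>2 b(t) = 0\<close> between the masses.
  In terms of the forces \<open>F\<^sub>o\<^sub>u\<^sub>t, F\<^sub>i\<^sub>n\<close> between the cubes and the self force \<open>K\<close> of a cube,
  the paper's \<open>\<gamma>\<^sub>1\<close> and \<open>\<gamma>\<^sub>0\<close> are \<open>72 (a - b)\<close> and \<open>9 (K\<^sup>2/t\<^sup>2 - F\<^sub>i\<^sub>n F\<^sub>o\<^sub>u\<^sub>t)\<close>, so its formula
  for \<open>\<mu>\<^sub>1/\<mu>\<^sub>2\<close> is \<open>-b/a\<close>. It remains to show \<open>a < 0\<close>, \<open>a < b\<close> and \<open>F\<^sub>o\<^sub>u\<^sub>t + K < 0\<close> on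
  \<open>(0,1)\<close>, by elementary estimates of the distances between the vertices (for \<open>a < b\<close> on six
  subintervals).
\<close>

unbundle bit_operations_syntax

section \<open>Residuals of the central configuration equations\<close>

definition central_residual ::
    "nat \<Rightarrow> (nat \<Rightarrow> 'a::real_normed_vector) \<Rightarrow> (nat \<Rightarrow> real) \<Rightarrow> real \<Rightarrow> nat \<Rightarrow> 'a" where
  "central_residual N q m c i =
     (\<Sum>j\<in>{j. j < N \<and> j \<noteq> i}. (m j * (1 / norm (q j - q i) ^ 3 - c)) *\<^sub>R (q j - q i))"

lemma central_configuration_iff_residual:
  "central_configuration N q m \<longleftrightarrow>
     inj_on q {..<N} \<and> (\<exists>c. \<forall>i<N. central_residual N q m c i = 0)"
  by (auto simp: central_configuration_def central_residual_def inj_on_def)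

lemma central_residual_equivariant:
  fixes f :: "'a::real_normed_vector \<Rightarrow> 'a"
  assumes \<sigma>: "bij_betw \<sigma> {..<N} {..<N}" and f: "linear f" "\<And>x. norm (f x) = norm x"
    and q: "\<And>j. j < N \<Longrightarrow> q (\<sigma> j) = f (q j)" and m: "\<And>j. j < N \<Longrightarrow> m (\<sigma> j) = m j"
    and i: "i < N"
  shows "central_residual N q m c (\<sigma> i) = f (central_residual N q m c i)"
proof -
  let ?term = "\<lambda>i j. (m j * (1 / norm (q j - q i) ^ 3 - c)) *\<^sub>R (q j - q i)"
  have others: "{j. j < N \<and> j \<noteq> k} = {..<N} - {k}" for k
    by auto
  have "bij_betw \<sigma> ({..<N} - {i}) ({..<N} - {\<sigma> i})"
    using \<sigma> i by (intro bij_betw_DiffI) (auto simp: bij_betw_def)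
  then have "central_residual N q m c (\<sigma> i) = (\<Sum>j\<in>{..<N} - {i}. ?term (\<sigma> i) (\<sigma> j))"
    unfolding central_residual_def others by (rule sum.reindex_bij_betw[symmetric])
  also have "\<dots> = (\<Sum>j\<in>{..<N} - {i}. f (?term i j))"
  proof (rule sum.cong)
    fix j assume "j \<in> {..<N} - {i}"
    then have "q (\<sigma> j) - q (\<sigma> i) = f (q j - q i)" "m (\<sigma> j) = m j"
      using i q m linear_diff[OF f(1)] by simp_all
    then show "?term (\<sigma> i) (\<sigma> j) = f (?term i j)"
      using f by (simp add: linear_scale)
  qed simp
  also have "\<dots> = f (central_residual N q m c i)"
    unfolding central_residual_def others by (rule linear_sum[OF f(1), symmetric])
  finally show ?thesis .
qed

section \<open>Symmetries of the nested cubes\<close>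

definition sign_flip :: "nat \<Rightarrow> real^3 \<Rightarrow> real^3" where
  "sign_flip k x = (\<chi> m. cube_vertex k $ m * x $ m)"

lemma linear_sign_flip: "linear (sign_flip k)"
  by (rule linearI) (simp_all add: sign_flip_def vec_eq_iff algebra_simps)

lemma norm_sign_flip: "norm (sign_flip k x) = norm x"
proof -
  have "(cube_vertex k $ m)\<^sup>2 = 1" for m
    using exhaust_3[of m]
    by (auto simp: cube_vertex_def power2_eq_square power_mult_distrib[symmetric])
  then have "sign_flip k x \<bullet> sign_flip k x = x \<bullet> x"
    by (simp add: sign_flip_def inner_vec_def power2_eq_square algebra_simps)
  then show ?thesis
    by (simp add: norm_eq_sqrt_inner)
qed

lemma less_8_cases: "(k::nat) < 8 \<Longrightarrow> k = 0 \<or> k = 1 \<or> k = 2 \<or> k = 3 \<or> k = 4 \<or> k = 5 \<or> k = 6 \<or> k = 7"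
  by auto

lemma cube_vertex_xor:
  assumes "j < 8" "k < 8"
  shows "cube_vertex (j XOR k) = sign_flip k (cube_vertex j)"
  using less_8_cases[OF assms(1)] less_8_cases[OF assms(2)]
  by (elim disjE) (simp_all add: sign_flip_def cube_vertex_def vec_eq_iff forall_3)

lemma nested_index_xor:
  fixes j k :: nat
  assumes "j < 16" "k < 8"
  shows "j XOR k < 16" "j XOR k < 8 \<longleftrightarrow> j < 8" "8 \<le> j \<Longrightarrow> (j XOR k) - 8 = (j - 8) XOR k"
proof -
  have "j - 8 < 8 \<and> 8 \<le> j \<or> j < 8"
    using assms(1) by auto
  then have "j XOR k < 16 \<and> (j XOR k < 8 \<longleftrightarrow> j < 8) \<and> (8 \<le> j \<longrightarrow> (j XOR k) - 8 = (j - 8) XOR k)"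
  proof
    assume "j - 8 < 8 \<and> 8 \<le> j"
    then obtain r where r: "j = r + 8" "r < 8"
      by (metis le_add_diff_inverse2)
    then show ?thesis
      using less_8_cases[OF r(2)] less_8_cases[OF assms(2)] by (elim disjE) simp_all
  next
    assume "j < 8"
    then show ?thesis
      using less_8_cases[OF \<open>j < 8\<close>] less_8_cases[OF assms(2)] by (elim disjE) simp_all
  qed
  then show "j XOR k < 16" "j XOR k < 8 \<longleftrightarrow> j < 8" "8 \<le> j \<Longrightarrow> (j XOR k) - 8 = (j - 8) XOR k"
    by auto
qed

lemma nested_cubes_xor:
  assumes "j < 16" "k < 8"
  shows "nested_cubes t (j XOR k) = sign_flip k (nested_cubes t j)"
    and "nested_masses \<mu>1 \<mu>2 (j XOR k) = nested_masses \<mu>1 \<mu>2 j"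
proof -
  have "sign_flip k (a *\<^sub>R x) = a *\<^sub>R sign_flip k x" for a x
    by (simp add: sign_flip_def vec_eq_iff)
  then show "nested_cubes t (j XOR k) = sign_flip k (nested_cubes t j)"
    using nested_index_xor[OF assms] assms cube_vertex_xor[of _ k]
    by (cases "j < 8") (simp_all add: nested_cubes_def)
  show "nested_masses \<mu>1 \<mu>2 (j XOR k) = nested_masses \<mu>1 \<mu>2 j"
    using nested_index_xor[OF assms] by (simp add: nested_masses_def)
qed

lemma nested_cubes_residual_xor:
  assumes "i < 16" "k < 8"
  shows "central_residual 16 (nested_cubes t) (nested_masses \<mu>1 \<mu>2) c (i XOR k) =
           sign_flip k (central_residual 16 (nested_cubes t) (nested_masses \<mu>1 \<mu>2) c i)"
proof (rule central_residual_equivariant)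
  show "bij_betw (\<lambda>j. j XOR k) {..<16} {..<16}"
    by (rule bij_betwI[where g = "\<lambda>j. j XOR k"])
      (use nested_index_xor[OF _ assms(2)] in \<open>auto simp: xor.assoc\<close>)
qed (use assms nested_cubes_xor linear_sign_flip norm_sign_flip in auto)

lemma nested_cubes_residuals_vanish_iff:
  "(\<forall>i<16. central_residual 16 (nested_cubes t) (nested_masses \<mu>1 \<mu>2) c i = 0) \<longleftrightarrow>
     central_residual 16 (nested_cubes t) (nested_masses \<mu>1 \<mu>2) c 0 = 0 \<and>
     central_residual 16 (nested_cubes t) (nested_masses \<mu>1 \<mu>2) c 8 = 0"
proof (intro iffI allI impI)
  fix i :: nat
  assume vanish: "central_residual 16 (nested_cubes t) (nested_masses \<mu>1 \<mu>2) c 0 = 0 \<and>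
     central_residual 16 (nested_cubes t) (nested_masses \<mu>1 \<mu>2) c 8 = 0" and "i < 16"
  obtain i0 k where "i0 \<in> {0, 8}" "k < 8" "i = i0 XOR k"
  proof (cases "i < 8")
    case True
    then show ?thesis by (intro that[of 0 i]) simp_all
  next
    case False
    then have "i - 8 < 8"
      using \<open>i < 16\<close> by simp
    then have "i = 8 XOR (i - 8)"
      using False less_8_cases[OF \<open>i - 8 < 8\<close>] by (elim disjE) auto
    then show ?thesis using False \<open>i < 16\<close> by (intro that[of 8 "i - 8"]) simp_all
  qed
  then show "central_residual 16 (nested_cubes t) (nested_masses \<mu>1 \<mu>2) c i = 0"
    using vanish \<open>i < 16\<close> nested_cubes_residual_xor[of i0 k] linear_0[OF linear_sign_flip] by auto
qed auto

section \<open>The residuals at \<open>q\<^sub>1\<close> and \<open>q\<^sub>9\<close>\<close>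

text \<open>Squared distances from \<open>q\<^sub>1\<close> to the inner vertices with two, resp. one, negative coordinates.\<close>

definition dist2_plus :: "real \<Rightarrow> real" where
  "dist2_plus t = 3 * t^2 + 2 * t + 3"

definition dist2_minus :: "real \<Rightarrow> real" where
  "dist2_minus t = 3 * t^2 - 2 * t + 3"

text \<open>
  Minus the first coordinate of \<open>\<Sum> (v - q\<^sub>1) / |v - q\<^sub>1|\<^sup>3\<close> over the seven other vertices \<open>v\<close> of
  the outer cube (three edges, three face diagonals, one space diagonal). Similarly
  \<open>force_on_outer\<close> is the first coordinate of this sum over the inner vertices, and
  \<open>force_on_inner\<close> that of \<open>\<Sum> (v - q\<^sub>9) / |v - q\<^sub>9|\<^sup>3\<close> over the outer vertices; in both the
  distance along the diagonal is written \<open>\<surd>3 (1 - t)\<close>, which assumes \<open>t < 1\<close>.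
\<close>

definition cube_self_force :: real where
  "cube_self_force = 2 / 2 ^ 3 + 4 / (2 * sqrt 2) ^ 3 + 2 / (2 * sqrt 3) ^ 3"

definition force_on_outer :: "real \<Rightarrow> real" where
  "force_on_outer t =
     (t - 1) / (sqrt 3 * (1 - t)) ^ 3 + (t - 3) / sqrt (dist2_minus t) ^ 3
     - (t + 3) / sqrt (dist2_plus t) ^ 3 - (1 + t) / (sqrt 3 * (1 + t)) ^ 3"

definition force_on_inner :: "real \<Rightarrow> real" where
  "force_on_inner t =
     (1 - t) / (sqrt 3 * (1 - t)) ^ 3 + (1 - 3 * t) / sqrt (dist2_minus t) ^ 3
     - (1 + 3 * t) / sqrt (dist2_plus t) ^ 3 - (1 + t) / (sqrt 3 * (1 + t)) ^ 3"

lemma norm_vec3: "norm (x :: real^3) = sqrt ((x $ 1)\<^sup>2 + (x $ 2)\<^sup>2 + (x $ 3)\<^sup>2)"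
  by (simp add: norm_vec_def L2_set_def sum_3)

lemma dist2_as_sums:
  "2 * (t - 1)\<^sup>2 + (- t - 1)\<^sup>2 = dist2_minus t" "2 * (1 - t)\<^sup>2 + (- 1 - t)\<^sup>2 = dist2_minus t"
  "2 * (- t - 1)\<^sup>2 + (t - 1)\<^sup>2 = dist2_plus t" "2 * (- 1 - t)\<^sup>2 + (1 - t)\<^sup>2 = dist2_plus t"
  by (simp_all add: dist2_plus_def dist2_minus_def power2_eq_square algebra_simps)

lemma sqrt_8_12: "sqrt 8 = 2 * sqrt 2" "sqrt 12 = 2 * sqrt 3"
  using real_sqrt_mult[of 4 2] real_sqrt_mult[of 4 3] by simp_all

lemma central_residual_outer_vertex:
  assumes "0 < t" "t < 1"
  shows "central_residual 16 (nested_cubes t) (nested_masses \<mu>1 \<mu>2) c 0 =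
    (\<mu>2 * force_on_outer t - \<mu>1 * cube_self_force + 8 * c * (\<mu>1 + \<mu>2)) *\<^sub>R cube_vertex 0"
proof -
  have others: "{j. j < 16 \<and> j \<noteq> 0} = {1, 2, 3, 4, 5, 6, 7, 8, 9, 10, 11, 12, 13, 14, 15::nat}"
    by (simp add: set_eq_iff) presburger
  have "central_residual 16 (nested_cubes t) (nested_masses \<mu>1 \<mu>2) c 0 $ m =
      \<mu>2 * force_on_outer t - \<mu>1 * cube_self_force + 8 * c * (\<mu>1 + \<mu>2)" if "m = 1 \<or> m = 2 \<or> m = 3" for m
    using that assms unfolding central_residual_def others
    by (elim disjE; simp add: norm_vec3 nested_cubes_def cube_vertex_def nested_masses_def
        dist2_as_sums real_sqrt_mult sqrt_8_12 force_on_outer_def cube_self_force_def;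
        simp only: divide_inverse inverse_mult_distrib; simp add: algebra_simps)
  then show ?thesis
    by (simp add: vec_eq_iff forall_3 cube_vertex_def)
qed

lemma central_residual_inner_vertex:
  assumes "0 < t" "t < 1"
  shows "central_residual 16 (nested_cubes t) (nested_masses \<mu>1 \<mu>2) c 8 =
    (\<mu>1 * force_on_inner t - \<mu>2 * cube_self_force / t^2 + 8 * c * t * (\<mu>1 + \<mu>2)) *\<^sub>R cube_vertex 0"
proof -
  have others: "{j. j < 16 \<and> j \<noteq> 8} = {0, 1, 2, 3, 4, 5, 6, 7, 9, 10, 11, 12, 13, 14, 15::nat}"
    by (simp add: set_eq_iff) presburger
  have scaled: "t * inverse (t ^ 3) = inverse (t^2)" "t * (inverse (t ^ 3) * x) = inverse (t^2) * x" for x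
    using assms by (simp_all add: power3_eq_cube power2_eq_square)
  have "central_residual 16 (nested_cubes t) (nested_masses \<mu>1 \<mu>2) c 8 $ m =
      \<mu>1 * force_on_inner t - \<mu>2 * cube_self_force / t^2 + 8 * c * t * (\<mu>1 + \<mu>2)" if "m = 1 \<or> m = 2 \<or> m = 3" for m
    using that assms unfolding central_residual_def others
    by (elim disjE; simp add: norm_vec3 nested_cubes_def cube_vertex_def nested_masses_def
        dist2_as_sums real_sqrt_mult sqrt_8_12 force_on_inner_def cube_self_force_def;
        simp only: divide_inverse inverse_mult_distrib; simp add: algebra_simps scaled)
  then show ?thesis
    by (simp add: vec_eq_iff forall_3 cube_vertex_def)
qed

lemma inj_on_nested_cubes:
  assumes "0 < t" "t < 1"
  shows "inj_on (nested_cubes t) {..<16}"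
proof (rule inj_onI)
  have cube_inj: "i = j" if "i < 8" "j < 8" "cube_vertex i = cube_vertex j" for i j
    using less_8_cases[OF that(1)] less_8_cases[OF that(2)] that(3)
    by (elim disjE) (simp_all add: cube_vertex_def vec_eq_iff forall_3)
  have mixed: "cube_vertex i \<noteq> t *\<^sub>R cube_vertex j" for i j
  proof
    assume "cube_vertex i = t *\<^sub>R cube_vertex j"
    then have "\<bar>cube_vertex i $ 1\<bar> = t * \<bar>cube_vertex j $ 1\<bar>"
      using assms by (simp add: abs_mult)
    then show False
      using assms by (simp add: cube_vertex_def)
  qed
  fix i j :: nat
  assume "i \<in> {..<16}" "j \<in> {..<16}" and eq: "nested_cubes t i = nested_cubes t j"
  show "i = j"
  proof (cases "i < 8"; cases "j < 8")
    assume "i < 8" "j < 8"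
    then show ?thesis using eq cube_inj by (simp add: nested_cubes_def)
  next
    assume "i < 8" "\<not> j < 8"
    then show ?thesis using eq mixed by (simp add: nested_cubes_def)
  next
    assume "\<not> i < 8" "j < 8"
    then show ?thesis using eq mixed[of j "i - 8"] by (simp add: nested_cubes_def)
  next
    assume ij: "\<not> i < 8" "\<not> j < 8"
    then have "cube_vertex (i - 8) = cube_vertex (j - 8)"
      using eq assms by (simp add: nested_cubes_def)
    moreover have "i - 8 < 8" "j - 8 < 8"
      using \<open>i \<in> {..<16}\<close> \<open>j \<in> {..<16}\<close> by auto
    ultimately show ?thesis
      using ij cube_inj[of "i - 8" "j - 8"] by simp
  qed
qed

lemma nested_cubes_central_iff:
  assumes "0 < t" "t < 1"
  shows "central_configuration 16 (nested_cubes t) (nested_masses \<mu>1 \<mu>2) \<longleftrightarrow>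
    (\<exists>c. \<mu>2 * force_on_outer t - \<mu>1 * cube_self_force + 8 * c * (\<mu>1 + \<mu>2) = 0 \<and>
         \<mu>1 * force_on_inner t - \<mu>2 * cube_self_force / t^2 + 8 * c * t * (\<mu>1 + \<mu>2) = 0)"
proof -
  have "cube_vertex 0 $ 1 = 1"
    by (simp add: cube_vertex_def)
  then have "cube_vertex 0 \<noteq> 0"
    by auto
  then show ?thesis
    unfolding central_configuration_iff_residual nested_cubes_residuals_vanish_iff
      central_residual_outer_vertex[OF assms] central_residual_inner_vertex[OF assms]
    using inj_on_nested_cubes[OF assms] by simp
qed

section \<open>The functions \<open>\<gamma>\<^sub>0\<close>, \<open>\<gamma>\<^sub>1\<close> and the mass ratio\<close>

lemma cube_self_force_eq: "cube_self_force = 1/4 + sqrt 2 / 8 + sqrt 3 / 36"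
proof -
  have "4 / (2 * sqrt 2) ^ 3 = sqrt 2 / 8" "2 / (2 * sqrt 3) ^ 3 = sqrt 3 / 36"
    by (simp_all add: power_mult_distrib power3_eq_cube real_div_sqrt)
  then show ?thesis
    by (simp add: cube_self_force_def)
qed

lemma diagonal_force: "x / (sqrt 3 * x) ^ 3 = sqrt 3 / 9 / x^2"
proof (cases "x = 0")
  case False
  then have "x / (sqrt 3 * x) ^ 3 = 1 / (3 * sqrt 3) / x^2"
    by (simp add: power_mult_distrib power3_eq_cube power2_eq_square)
  also have "1 / (3 * sqrt 3) = sqrt 3 / 9"
    by (simp add: real_div_sqrt)
  finally show ?thesis .
qed simp

lemma force_on_outer_eq:
  "force_on_outer t = - (sqrt 3 / 9) / (1 - t)^2 + (t - 3) / sqrt (dist2_minus t) ^ 3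
     - (t + 3) / sqrt (dist2_plus t) ^ 3 - (sqrt 3 / 9) / (1 + t)^2"
proof -
  have "(t - 1) / (sqrt 3 * (1 - t)) ^ 3 = - ((1 - t) / (sqrt 3 * (1 - t)) ^ 3)"
    by (simp add: minus_divide_left)
  then show ?thesis
    unfolding force_on_outer_def diagonal_force by simp
qed

lemma force_on_inner_eq:
  "force_on_inner t = (sqrt 3 / 9) / (1 - t)^2 + (1 - 3 * t) / sqrt (dist2_minus t) ^ 3
     - (1 + 3 * t) / sqrt (dist2_plus t) ^ 3 - (sqrt 3 / 9) / (1 + t)^2"
  unfolding force_on_inner_def diagonal_force by simp

lemma dist2_pos: "0 < dist2_plus t" "0 < dist2_minus t"
proof -
  have "dist2_plus t = 2 * t^2 + (t + 1)^2 + 2" "dist2_minus t = 2 * t^2 + (t - 1)^2 + 2"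
    by (simp_all add: dist2_plus_def dist2_minus_def power2_eq_square algebra_simps)
  then show "0 < dist2_plus t" "0 < dist2_minus t"
    by (simp_all add: add_nonneg_pos)
qed

lemma powr_three_halves:
  assumes "0 \<le> x"
  shows "x powr (3/2) = sqrt x ^ 3"
proof -
  have "x powr (3/2) = (x powr (1/2)) powr 3"
    by (simp add: powr_powr)
  then show ?thesis
    using assms by (simp add: powr_half_sqrt)
qed

text \<open>
  \<open>t\<close> times the residual equation at \<open>q\<^sub>1\<close> minus the one at \<open>q\<^sub>9\<close> does not involve \<open>c\<close>;
  it reads \<open>\<mu>\<^sub>1 * mass_coeff_outer t + \<mu>\<^sub>2 * mass_coeff_inner t = 0\<close>.
\<close>

definition mass_coeff_outer :: "real \<Rightarrow> real" where
  "mass_coeff_outer t = - t * cube_self_force - force_on_inner t"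

definition mass_coeff_inner :: "real \<Rightarrow> real" where
  "mass_coeff_inner t = t * force_on_outer t + cube_self_force / t^2"

lemma gamma1_eq:
  assumes "0 < t" "t < 1"
  shows "gamma1 t = 72 * (mass_coeff_outer t - mass_coeff_inner t)"
proof -
  txt \<open>Naming the square roots and reciprocals makes the identity polynomial modulo \<open>rel\<close>.\<close>
  define s K P Q U V W T where "s = sqrt 3" and "K = cube_self_force"
    and "P = 1 / sqrt (dist2_plus t) ^ 3" and "Q = 1 / sqrt (dist2_minus t) ^ 3"
    and "U = 1 / (1 - t)" and "V = 1 / (1 + t)" and "W = 1 / (t - 1)" and "T = 1 / t^2"
  have rel: "U * (1 - t) = 1" "V * (1 + t) = 1" "W = - U" "T * t^2 = 1"
    using assms by (simp_all add: U_def V_def W_def T_def divide_minus_right[symmetric])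
  have K: "2 * sqrt 3 + 9 * sqrt 2 + 18 = 72 * K"
    by (simp add: K_def cube_self_force_eq)
  have gamma1: "gamma1 t = - (72 * K * t - 72 * (t^2 + 6*t + 1) * P
      + 72 * (t^2 - 6*t + 1) * Q - 8 * s * V - 8 * s * W + 72 * K * T)"
    using dist2_pos[of t]
    by (simp add: gamma1_def K powr_three_halves s_def P_def Q_def V_def W_def T_def
        add.commute[of t 1] dist2_plus_def[symmetric] dist2_minus_def[symmetric])
  have forces: "force_on_outer t = - s / 9 * U^2 + (t - 3) * Q - (t + 3) * P - s / 9 * V^2"
    "force_on_inner t = s / 9 * U^2 + (1 - 3 * t) * Q - (1 + 3 * t) * P - s / 9 * V^2"
    by (simp_all add: force_on_outer_eq force_on_inner_eq s_def P_def Q_def U_def V_def power_divide)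
  have "K / t^2 = K * T"
    by (simp add: T_def)
  then show ?thesis
    unfolding gamma1 mass_coeff_outer_def mass_coeff_inner_def forces K_def[symmetric]
    using rel by algebra
qed

lemma gamma0_eq:
  assumes "0 < t" "t < 1"
  shows "gamma0 t = 9 * (cube_self_force^2 / t^2 - force_on_inner t * force_on_outer t)"
proof -
  define s K P Q U V W T where "s = sqrt 3" and "K = cube_self_force"
    and "P = 1 / sqrt (dist2_plus t) ^ 3" and "Q = 1 / sqrt (dist2_minus t) ^ 3"
    and "U = 1 / (1 - t)" and "V = 1 / (1 + t)" and "W = 1 / (t - 1)" and "T = 1 / t^2"
  have rel: "U * (1 - t) = 1" "V * (1 + t) = 1" "W = - U" "T * t^2 = 1" "s^2 = 3"
    using assms by (simp_all add: U_def V_def W_def T_def s_def divide_minus_right[symmetric])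
  have K2: "6 * sqrt 3 * sqrt 2 + 12 * sqrt 3 + 54 * sqrt 2 + 83 = 864 * K^2"
    by (simp add: K_def cube_self_force_eq power2_eq_square algebra_simps)
  have sqrt_cube_sq: "(sqrt x ^ 3)^2 = x^3" if "0 \<le> x" for x
    using that by (metis power_mult mult.commute real_sqrt_pow2)
  have powr: "(3*t^2 + 2*t + 3) powr (3/2) = 1 / P" "(3*t^2 - 2*t + 3) powr (3/2) = 1 / Q"
    and cube: "(3*t^2 + 2*t + 3) ^ 3 = 1 / P^2" "(3*t^2 - 2*t + 3) ^ 3 = 1 / Q^2"
    using dist2_pos[of t] sqrt_cube_sq[of "dist2_plus t"] sqrt_cube_sq[of "dist2_minus t"]
    by (simp_all add: P_def Q_def powr_three_halves power_one_over
        dist2_plus_def[symmetric] dist2_minus_def[symmetric])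
  have gamma0: "gamma0 t = - 9 * (3*t + 1) * (t + 3) * P^2 + 9 * (3*t - 1) * (t - 3) * Q^2
      + 9 * K^2 * T - 4 * s * P * V - 2 * s * Q * V - 2 * s * P * W - 4 * s * Q * W
      - 144 * t * P * Q - 1/3 * V^4 + 1/3 * W^4"
    unfolding gamma0_def K2 unfolding powr cube s_def[symmetric]
    by (simp add: V_def W_def T_def power_one_over add.commute[of t 1])
  have forces: "force_on_outer t = - s / 9 * U^2 + (t - 3) * Q - (t + 3) * P - s / 9 * V^2"
    "force_on_inner t = s / 9 * U^2 + (1 - 3 * t) * Q - (1 + 3 * t) * P - s / 9 * V^2"
    by (simp_all add: force_on_outer_eq force_on_inner_eq s_def P_def Q_def U_def V_def power_divide)
  have "K^2 / t^2 = K^2 * T"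
    by (simp add: T_def)
  then show ?thesis
    unfolding gamma0 forces K_def[symmetric]
    using rel by algebra
qed

lemma cc_eq:
  assumes "0 < t" "t < 1"
  shows "cc t = - (cube_self_force^2 / t^2 - force_on_inner t * force_on_outer t)
    / (8 * (mass_coeff_outer t - mass_coeff_inner t))"
  unfolding cc_def gamma0_eq[OF assms] gamma1_eq[OF assms]
  by (cases "mass_coeff_outer t = mass_coeff_inner t") (simp_all add: divide_simps)

lemma mass_ratio_numerator_eq:
  assumes "0 < t" "t < 1"
  shows "(sqrt 3 * t + sqrt 3) / (3 * (t + 1) ^ 3) + 3 * (t + 3) / (3*t^2 + 2*t + 3) powr (3/2)
      - 3 * (t - 3) / (3*t^2 - 2*t + 3) powr (3/2) + (sqrt 3 * t - sqrt 3) / (3 * (t - 1) ^ 3)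
    = - 3 * force_on_outer t"
proof -
  define s P Q U V W where "s = sqrt 3"
    and "P = 1 / sqrt (dist2_plus t) ^ 3" and "Q = 1 / sqrt (dist2_minus t) ^ 3"
    and "U = 1 / (1 - t)" and "V = 1 / (1 + t)" and "W = 1 / (t - 1)"
  have rel: "U * (1 - t) = 1" "V * (1 + t) = 1" "W = - U"
    using assms by (simp_all add: U_def V_def W_def divide_minus_right[symmetric])
  have "force_on_outer t = - s / 9 * U^2 + (t - 3) * Q - (t + 3) * P - s / 9 * V^2"
    by (simp add: force_on_outer_eq s_def P_def Q_def U_def V_def power_divide)
  moreover have "(sqrt 3 * t + sqrt 3) / (3 * (t + 1) ^ 3)
      + 3 * (t + 3) / (3*t^2 + 2*t + 3) powr (3/2) - 3 * (t - 3) / (3*t^2 - 2*t + 3) powr (3/2)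
      + (sqrt 3 * t - sqrt 3) / (3 * (t - 1) ^ 3)
    = 1/3 * (s * t + s) * V^3 + 3 * (t + 3) * P - 3 * (t - 3) * Q + 1/3 * (s * t - s) * W^3"
    using dist2_pos[of t]
    by (simp add: s_def P_def Q_def V_def W_def powr_three_halves power_one_over add.commute[of t 1]
        dist2_plus_def[symmetric] dist2_minus_def[symmetric])
  ultimately show ?thesis
    using rel by algebra
qed

lemma mass_ratio_eq:
  assumes "0 < t" "t < 1" and a: "mass_coeff_outer t \<noteq> 0"
    and ab: "mass_coeff_outer t \<noteq> mass_coeff_inner t"
    and f: "force_on_outer t + cube_self_force \<noteq> 0"
  shows "mass_ratio t = - mass_coeff_inner t / mass_coeff_outer t"
proof -
  define K B F1 F2 a b where "K = cube_self_force" and "B = K / t^2"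
    and "F1 = force_on_outer t" and "F2 = force_on_inner t"
    and "a = mass_coeff_outer t" and "b = mass_coeff_inner t"
  have "a - b \<noteq> 0"
    using ab by (simp add: a_def b_def)
  have "cc t = - (K * B - F2 * F1) / (8 * (a - b))"
    using cc_eq[OF assms(1,2)] by (simp add: K_def B_def F1_def F2_def a_def b_def power2_eq_square)
  then have quotients: "8 * cc t + F1 = (- (K * B - F2 * F1) + F1 * (a - b)) / (a - b)"
    "8 * cc t - K = (- (K * B - F2 * F1) - K * (a - b)) / (a - b)"
    using \<open>a - b \<noteq> 0\<close> by (simp_all add: field_simps)
  have coeffs: "a = - t * K - F2" "b = t * F1 + B"
    by (simp_all add: a_def b_def mass_coeff_outer_def mass_coeff_inner_def F1_def F2_def K_def B_def)
  have "- (K * B - F2 * F1) + F1 * (a - b) = - b * (F1 + K)"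
    "- (K * B - F2 * F1) - K * (a - b) = - a * (F1 + K)"
    unfolding coeffs by (simp_all add: algebra_simps)
  with quotients have cc_forces: "8 * cc t + F1 = - b * (F1 + K) / (a - b)"
    "8 * cc t - K = - a * (F1 + K) / (a - b)"
    by simp_all
  have numerator: "24 * cc t - (sqrt 3 * t + sqrt 3) / (3 * (t + 1) ^ 3)
      - 3 * (t + 3) / (3*t^2 + 2*t + 3) powr (3/2) + 3 * (t - 3) / (3*t^2 - 2*t + 3) powr (3/2)
      - (sqrt 3 * t - sqrt 3) / (3 * (t - 1) ^ 3) = 3 * (8 * cc t + F1)"
    using mass_ratio_numerator_eq[OF assms(1,2)] by (simp add: F1_def)
  have denominator: "24 * cc t - sqrt 3 / 12 - 3 * sqrt 2 / 8 - 3 / 4 = 3 * (8 * cc t - K)"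
    by (simp add: K_def cube_self_force_eq)
  show ?thesis
    unfolding mass_ratio_def numerator denominator cc_forces
    using a f \<open>a - b \<noteq> 0\<close> by (simp add: a_def b_def F1_def K_def divide_simps)
qed

section \<open>Estimates\<close>

lemma sqrt_3_bounds: "1732 / 1000 \<le> sqrt 3" "sqrt 3 \<le> 17321 / 10000"
proof -
  show "1732 / 1000 \<le> sqrt 3"
    by (rule real_le_rsqrt) (simp add: power2_eq_square)
  show "sqrt 3 \<le> 17321 / 10000"
    by (rule real_le_lsqrt) (simp_all add: power2_eq_square)
qed

lemma sqrt_2_bounds: "14142 / 10000 \<le> sqrt 2" "sqrt 2 \<le> 14143 / 10000"
proof -
  show "14142 / 10000 \<le> sqrt 2"
    by (rule real_le_rsqrt) (simp add: power2_eq_square)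
  show "sqrt 2 \<le> 14143 / 10000"
    by (rule real_le_lsqrt) (simp_all add: power2_eq_square)
qed

lemma cube_self_force_bounds:
  "4748 / 10000 \<le> cube_self_force" "cube_self_force \<le> 47491 / 100000"
  using sqrt_2_bounds sqrt_3_bounds by (simp_all add: cube_self_force_eq)

lemma inverse_sqrt_cube_le:
  assumes "0 < r" "r^2 \<le> x"
  shows "1 / sqrt x ^ 3 \<le> 1 / r ^ 3"
proof -
  have "r \<le> sqrt x"
    using assms(2) by (rule real_le_rsqrt)
  then have "r ^ 3 \<le> sqrt x ^ 3"
    using assms(1) by (simp add: power_mono)
  then show ?thesis
    using assms(1) by (intro frac_le) simp_all
qed

lemma inverse_sqrt_cube_ge:
  assumes "0 < x" "x \<le> r^2" "0 \<le> r"
  shows "1 / r ^ 3 \<le> 1 / sqrt x ^ 3"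
proof -
  have "sqrt x \<le> r"
    using assms by (intro real_le_lsqrt) simp_all
  then have "sqrt x ^ 3 \<le> r ^ 3"
    using assms(1) power_mono[of "sqrt x" r 3] by simp
  then show ?thesis
    using assms(1) by (intro frac_le) simp_all
qed

lemma inverse_cube_diff_ge:
  fixes x y :: real
  assumes "0 < y" "y \<le> x"
  shows "3/4 * (x^2 - y^2) * (1 / (x^2 * y^3) + 1 / (x^3 * y^2)) \<le> 1 / y^3 - 1 / x^3"
proof -
  have "3/4 * (x^2 - y^2) * (x + y) = x^3 - y^3 - (x - y)^3 / 4"
    by algebra
  moreover have "0 \<le> (x - y)^3"
    using assms by simp
  ultimately have "3/4 * (x^2 - y^2) * (x + y) / (x^3 * y^3) \<le> (x^3 - y^3) / (x^3 * y^3)"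
    using assms by (intro divide_right_mono) simp_all
  moreover have "3/4 * (x^2 - y^2) * (x + y) / (x^3 * y^3)
      = 3/4 * (x^2 - y^2) * (1 / (x^2 * y^3) + 1 / (x^3 * y^2))"
    "(x^3 - y^3) / (x^3 * y^3) = 1 / y^3 - 1 / x^3"
    using assms by (simp_all add: field_simps power2_eq_square power3_eq_cube)
  ultimately show ?thesis
    by simp
qed

lemma dist2_range:
  assumes "0 \<le> t" "t \<le> 1"
  shows "3 \<le> dist2_plus t" "dist2_plus t \<le> 8" "8/3 \<le> dist2_minus t" "dist2_minus t \<le> 4"
    "dist2_minus t \<le> dist2_plus t"
proof -
  have "t * t \<le> t" "0 \<le> t * t"
    using assms mult_left_le[of t t] by simp_all
  moreover have "dist2_minus t = 3 * (t - 1/3)^2 + 8/3"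
    by (simp add: dist2_minus_def power2_eq_square algebra_simps)
  ultimately show "3 \<le> dist2_plus t" "dist2_plus t \<le> 8" "8/3 \<le> dist2_minus t" "dist2_minus t \<le> 4"
    "dist2_minus t \<le> dist2_plus t"
    using assms zero_le_power2[of "t - 1/3"]
    unfolding dist2_plus_def dist2_minus_def power2_eq_square by linarith+
qed

lemma dist2_bounds:
  assumes "0 \<le> t" "t \<le> 1"
  shows "1 / sqrt (dist2_plus t) ^ 3 \<le> 19248 / 100000"
    and "1 / sqrt (dist2_minus t) ^ 3 \<le> 2297 / 10000"
    and "1 / 8 \<le> 1 / sqrt (dist2_minus t) ^ 3"
    and "1 / sqrt (dist2_plus t) ^ 3 \<le> 1 / sqrt (dist2_minus t) ^ 3"
proof -
  note range = dist2_range[OF assms]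
  have "1 / sqrt (dist2_plus t) ^ 3 \<le> 1 / (1732 / 1000) ^ 3"
    using range(1) by (intro inverse_sqrt_cube_le) (simp_all add: power2_eq_square)
  then show "1 / sqrt (dist2_plus t) ^ 3 \<le> 19248 / 100000"
    by (simp add: power3_eq_cube)
  have "1 / sqrt (dist2_minus t) ^ 3 \<le> 1 / (16329 / 10000) ^ 3"
    using range(3) by (intro inverse_sqrt_cube_le) (simp_all add: power2_eq_square)
  then show "1 / sqrt (dist2_minus t) ^ 3 \<le> 2297 / 10000"
    by (simp add: power3_eq_cube)
  have "1 / 2 ^ 3 \<le> 1 / sqrt (dist2_minus t) ^ 3"
    using range(4) dist2_pos[of t] by (intro inverse_sqrt_cube_ge) simp_all
  then show "1 / 8 \<le> 1 / sqrt (dist2_minus t) ^ 3"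
    by simp
  show "1 / sqrt (dist2_plus t) ^ 3 \<le> 1 / sqrt (dist2_minus t) ^ 3"
    using range(5) dist2_pos[of t] by (intro inverse_sqrt_cube_le) simp_all
qed

lemma inverse_square_diff_ge:
  fixes t u :: real
  assumes "0 < t" "t < 1" "0 \<le> u"
  shows "4 * u * t \<le> u / (1 - t)^2 - u / (1 + t)^2"
proof -
  have "(1 - t)^2 \<noteq> 0" "(1 + t)^2 \<noteq> 0"
    using assms by auto
  then have "u / (1 - t)^2 - u / (1 + t)^2
      = (u * (1 + t)^2 - u * (1 - t)^2) / ((1 - t)^2 * (1 + t)^2)"
    by (rule diff_frac_eq)
  moreover have "u * (1 + t)^2 - u * (1 - t)^2 = 4 * u * t" "(1 - t)^2 * (1 + t)^2 = (1 - t^2)^2"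
    by algebra+
  moreover have "t^2 < 1"
    using assms mult_strict_mono[of t 1 t 1] by (simp add: power2_eq_square)
  then have "0 < (1 - t^2)^2" "(1 - t^2)^2 \<le> 1"
    by (simp_all add: power_le_one)
  ultimately show ?thesis
    using assms by (simp add: le_divide_eq mult_left_le)
qed

lemma force_on_outer_plus_self_neg:
  assumes "0 < t" "t < 1"
  shows "force_on_outer t + cube_self_force < 0"
proof -
  define u P Q where "u = sqrt 3 / 9" and "P = 1 / sqrt (dist2_plus t) ^ 3"
    and "Q = 1 / sqrt (dist2_minus t) ^ 3"
  have outer: "force_on_outer t = (t - 3) * Q - (t + 3) * P - u / (1 - t)^2 - u / (1 + t)^2"
    by (simp add: force_on_outer_eq u_def P_def Q_def)
  have u: "19244 / 100000 \<le> u"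
    using sqrt_3_bounds by (simp add: u_def)
  have "u \<le> u / (1 - t)^2"
  proof -
    have "(1 - t)^2 \<le> 1" "0 < (1 - t)^2"
      using assms by (simp_all add: power_le_one)
    then show ?thesis
      using u by (simp add: le_divide_eq mult_left_le)
  qed
  moreover have "u / 4 \<le> u / (1 + t)^2"
  proof -
    have "(1 + t)^2 \<le> 2^2"
      using assms by (intro power_mono) simp_all
    then show ?thesis
      using u assms by (intro divide_left_mono) simp_all
  qed
  moreover have "(t - 3) * Q \<le> - 1/4"
  proof -
    have "1/8 \<le> Q"
      using dist2_bounds(3) assms by (simp add: Q_def)
    then have "(t - 3) * Q \<le> - 2 * Q"
      using assms by (intro mult_right_mono) simp_all
    then show ?thesis
      using \<open>1/8 \<le> Q\<close> by linarith
  qed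
  moreover have "0 \<le> (t + 3) * P"
    using assms dist2_pos[of t] by (simp add: P_def)
  ultimately show ?thesis
    using outer u cube_self_force_bounds(2) by linarith
qed

lemma mass_coeff_outer_neg:
  assumes "0 < t" "t < 1"
  shows "mass_coeff_outer t < 0"
proof -
  define u K x y where "u = sqrt 3 / 9" and "K = cube_self_force"
    and "x = sqrt (dist2_plus t)" and "y = sqrt (dist2_minus t)"
  define P Q A B where "P = 1 / x^3" and "Q = 1 / y^3" and "A = 1 / x^2" and "B = 1 / y^2"
  note range = dist2_range[of t]
  have xy: "x^2 = dist2_plus t" "y^2 = dist2_minus t" "0 < y" "y \<le> x"
    using dist2_pos[of t] range(5) assms by (simp_all add: x_def y_def)
  have "force_on_inner t = u / (1 - t)^2 + (1 - 3 * t) * Q - (1 + 3 * t) * P - u / (1 + t)^2"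
    by (simp add: force_on_inner_eq u_def P_def Q_def x_def y_def)
  then have inner: "force_on_inner t = (u / (1 - t)^2 - u / (1 + t)^2) + (Q - P) - 3 * t * (Q + P)"
    by (simp add: algebra_simps)
  have "3/4 * (x^2 - y^2) * (1 / (x^2 * y^3) + 1 / (x^3 * y^2)) \<le> Q - P"
    using inverse_cube_diff_ge[OF xy(3,4)] by (simp add: P_def Q_def)
  then have gap: "3 * t * (Q * A + P * B) \<le> Q - P"
    by (simp add: xy(1,2) dist2_plus_def dist2_minus_def P_def Q_def A_def B_def mult.commute)
  have "Q * (1 - A) \<le> 2297 / 10000 * (7/8)" "P * (1 - B) \<le> 19248 / 100000 * (3/4)"
    using dist2_bounds(1,2)[of t] range(1-4) dist2_pos[of t] assms
    by (intro mult_mono; simp add: P_def Q_def A_def B_def xy x_def y_def divide_simps)+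
  then have positive: "0 < 4 * u + K - 3 * Q * (1 - A) - 3 * P * (1 - B)"
    using sqrt_3_bounds cube_self_force_bounds(1) by (simp add: u_def K_def)
  have "t * (4 * u + K - 3 * Q * (1 - A) - 3 * P * (1 - B))
      = 4 * u * t + 3 * t * (Q * A + P * B) - 3 * t * (Q + P) + t * K"
    by (simp add: algebra_simps)
  also have "\<dots> \<le> (u / (1 - t)^2 - u / (1 + t)^2) + (Q - P) - 3 * t * (Q + P) + t * K"
    using inverse_square_diff_ge[of t u] assms gap by (simp add: u_def)
  also have "\<dots> = - mass_coeff_outer t"
    using inner by (simp add: mass_coeff_outer_def K_def)
  finally have "t * (4 * u + K - 3 * Q * (1 - A) - 3 * P * (1 - B)) \<le> - mass_coeff_outer t" .
  moreover have "0 < t * (4 * u + K - 3 * Q * (1 - A) - 3 * P * (1 - B))"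
    using positive assms by simp
  ultimately show ?thesis
    by linarith
qed

lemma add_inverse_square_antimono:
  fixes t t1 :: real
  assumes "0 < t" "t \<le> t1" "t1 \<le> 1"
  shows "t1 + 1 / t1^2 \<le> t + 1 / t^2"
proof -
  have "t^2 * t1^2 \<le> t * 1"
    using assms by (intro mult_mono) (simp_all add: power2_eq_square mult_le_one)
  then have "0 \<le> (t1 - t) * (t1 + t - t^2 * t1^2)"
    using assms by (intro mult_nonneg_nonneg) simp_all
  then have "(t1 - t) * (t^2 * t1^2) \<le> t1^2 - t^2"
    by (simp add: algebra_simps power2_eq_square)
  moreover have "t1^2 - t^2 = (1 / t^2 - 1 / t1^2) * (t^2 * t1^2)"
    using assms by (simp add: field_simps)
  ultimately have "t1 - t \<le> 1 / t^2 - 1 / t1^2"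
    using assms by (simp add: mult_le_cancel_right)
  then show ?thesis
    by simp
qed

lemma mass_coeff_inner_minus_outer:
  assumes "0 < t" "t < 1"
  shows "mass_coeff_inner t - mass_coeff_outer t = cube_self_force * (t + 1 / t^2)
    + sqrt 3 / 9 * (1 / (1 - t) - 1 / (1 + t))
    + (t^2 + 1) * (1 / sqrt (dist2_minus t) ^ 3 - 1 / sqrt (dist2_plus t) ^ 3)
    - 6 * t * (1 / sqrt (dist2_minus t) ^ 3 + 1 / sqrt (dist2_plus t) ^ 3)"
proof -
  define u P Q U V where "u = sqrt 3 / 9"
    and "P = 1 / sqrt (dist2_plus t) ^ 3" and "Q = 1 / sqrt (dist2_minus t) ^ 3"
    and "U = 1 / (1 - t)" and "V = 1 / (1 + t)"
  have rel: "U * (1 - t) = 1" "V * (1 + t) = 1"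
    using assms by (simp_all add: U_def V_def)
  have "force_on_outer t = (t - 3) * Q - (t + 3) * P - u * U^2 - u * V^2"
    "force_on_inner t = (1 - 3 * t) * Q - (1 + 3 * t) * P + u * U^2 - u * V^2"
    by (simp_all add: force_on_outer_eq force_on_inner_eq u_def P_def Q_def U_def V_def power_divide)
  then have "force_on_inner t + t * force_on_outer t
      = u * (U - V) + (t^2 + 1) * (Q - P) - 6 * t * (Q + P)"
    using rel by algebra
  then show ?thesis
    unfolding u_def[symmetric] P_def[symmetric] Q_def[symmetric] U_def[symmetric] V_def[symmetric]
    by (simp add: mass_coeff_outer_def mass_coeff_inner_def algebra_simps)
qed

text \<open>
  On \<open>[t\<^sub>0, t\<^sub>1]\<close> each term of \<open>mass_coeff_inner_minus_outer\<close> is bounded by its value at an end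
  point, with \<open>r\<close> a lower bound for \<open>sqrt (dist2_plus t\<^sub>0)\<close>; \<open>numeric\<close> is the resulting check.
\<close>

lemma mass_coeff_outer_lt_mass_coeff_inner_on_interval:
  fixes t t0 t1 r :: real
  assumes t: "0 < t" "t < 1" and interval: "0 \<le> t0" "t0 \<le> t" "t \<le> t1" "t1 \<le> 1"
    and r: "0 < r" "r^2 \<le> dist2_plus t0"
    and numeric: "0 < 4748 / 10000 * (t1 + 1 / t1^2) + 2 * (19244 / 100000) * t0 / (1 - t0^2)
      - 6 * t1 * (2297 / 10000 + 1 / r^3)"
  shows "mass_coeff_outer t < mass_coeff_inner t"
proof -
  define u K P Q where "u = sqrt 3 / 9" and "K = cube_self_force"
    and "P = 1 / sqrt (dist2_plus t) ^ 3" and "Q = 1 / sqrt (dist2_minus t) ^ 3"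
  have gap: "mass_coeff_inner t - mass_coeff_outer t
      = K * (t + 1 / t^2) + u * (1 / (1 - t) - 1 / (1 + t)) + (t^2 + 1) * (Q - P) - 6 * t * (Q + P)"
    unfolding u_def K_def P_def Q_def by (rule mass_coeff_inner_minus_outer[OF t])
  have "t0^2 \<le> t^2"
    using interval by (intro power_mono) simp_all
  have "4748 / 10000 * (t1 + 1 / t1^2) \<le> K * (t + 1 / t^2)"
    using cube_self_force_bounds(1) add_inverse_square_antimono[of t t1] t interval
    by (intro mult_mono) (simp_all add: K_def)
  moreover have "2 * (19244 / 100000) * t0 / (1 - t0^2) \<le> u * (1 / (1 - t) - 1 / (1 + t))"
  proof -
    have "t^2 < 1"
      using t mult_strict_mono[of t 1 t 1] by (simp add: power2_eq_square)
    then have "0 < 1 - t0^2"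
      using \<open>t0^2 \<le> t^2\<close> by linarith
    moreover have "2 * t0 / (1 - t0^2) \<le> 2 * t / (1 - t^2)"
      using \<open>t^2 < 1\<close> \<open>t0^2 \<le> t^2\<close> interval by (intro frac_le) simp_all
    moreover have "1 / (1 - t) - 1 / (1 + t) = 2 * t / (1 - t^2)"
      using t by (simp add: field_simps power2_eq_square)
    moreover have "19244 / 100000 \<le> u"
      using sqrt_3_bounds by (simp add: u_def)
    ultimately show ?thesis
      using interval mult_mono[of "19244 / 100000" u "2 * t0 / (1 - t0^2)" "2 * t / (1 - t^2)"]
      by simp
  qed
  moreover have "0 \<le> (t^2 + 1) * (Q - P)"
    using dist2_bounds(4)[of t] t by (simp add: P_def Q_def)
  moreover have "6 * t * (Q + P) \<le> 6 * t1 * (2297 / 10000 + 1 / r^3)"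
  proof -
    have "dist2_plus t0 \<le> dist2_plus t"
      unfolding dist2_plus_def using \<open>t0^2 \<le> t^2\<close> interval by linarith
    then have "P \<le> 1 / r^3"
      using r by (simp add: P_def inverse_sqrt_cube_le)
    moreover have "Q \<le> 2297 / 10000" "0 \<le> P" "0 \<le> Q"
      using dist2_bounds(2)[of t] dist2_pos[of t] t by (simp_all add: P_def Q_def)
    ultimately show ?thesis
      using t interval by (intro mult_mono) simp_all
  qed
  ultimately show ?thesis
    using gap numeric by linarith
qed

lemma mass_coeff_outer_lt_mass_coeff_inner:
  assumes "0 < t" "t < 1"
  shows "mass_coeff_outer t < mass_coeff_inner t"
proof -
  note on_interval = mass_coeff_outer_lt_mass_coeff_inner_on_interval[OF assms]
  consider "t \<le> 5/10" | "5/10 \<le> t" "t \<le> 6/10" | "6/10 \<le> t" "t \<le> 7/10"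
    | "7/10 \<le> t" "t \<le> 8/10" | "8/10 \<le> t" "t \<le> 9/10" | "9/10 \<le> t"
    by linarith
  then show ?thesis
  proof cases
    case 1
    then show ?thesis
      using assms by (intro on_interval[of 0 "5/10" "1732/1000"])
        (simp_all add: dist2_plus_def power2_eq_square power3_eq_cube)
  next
    case 2
    then show ?thesis
      by (intro on_interval[of "5/10" "6/10" "2179/1000"])
        (simp_all add: dist2_plus_def power2_eq_square power3_eq_cube)
  next
    case 3
    then show ?thesis
      by (intro on_interval[of "6/10" "7/10" "22978/10000"])
        (simp_all add: dist2_plus_def power2_eq_square power3_eq_cube)
  next
    case 4
    then show ?thesis
      by (intro on_interval[of "7/10" "8/10" "24228/10000"])
        (simp_all add: dist2_plus_def power2_eq_square power3_eq_cube)
  next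
    case 5
    then show ?thesis
      by (intro on_interval[of "8/10" "9/10" "25534/10000"])
        (simp_all add: dist2_plus_def power2_eq_square power3_eq_cube)
  next
    case 6
    then show ?thesis
      using assms by (intro on_interval[of "9/10" 1 "26888/10000"])
        (simp_all add: dist2_plus_def power2_eq_square power3_eq_cube)
  qed
qed

section \<open>Eliminating \<open>c\<close>\<close>

lemma nested_cubes_central_iff_mass_relation:
  assumes "0 < t" "t < 1" "\<mu>2 \<noteq> 0" "mass_coeff_outer t \<noteq> mass_coeff_inner t"
  shows "central_configuration 16 (nested_cubes t) (nested_masses \<mu>1 \<mu>2) \<longleftrightarrow>
    \<mu>1 * mass_coeff_outer t + \<mu>2 * mass_coeff_inner t = 0"
proof -
  define K F1 F2 where "K = cube_self_force" and "F1 = force_on_outer t" and "F2 = force_on_inner t"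
  have elimination: "t * (\<mu>2 * F1 - \<mu>1 * K + 8 * c * (\<mu>1 + \<mu>2))
      - (\<mu>1 * F2 - \<mu>2 * K / t^2 + 8 * c * t * (\<mu>1 + \<mu>2))
    = \<mu>1 * mass_coeff_outer t + \<mu>2 * mass_coeff_inner t" for c
    by (simp add: mass_coeff_outer_def mass_coeff_inner_def K_def F1_def F2_def algebra_simps)
  show ?thesis
    unfolding nested_cubes_central_iff[OF assms(1,2)]
      K_def[symmetric] F1_def[symmetric] F2_def[symmetric]
  proof
    assume "\<exists>c. \<mu>2 * F1 - \<mu>1 * K + 8 * c * (\<mu>1 + \<mu>2) = 0 \<and>
      \<mu>1 * F2 - \<mu>2 * K / t^2 + 8 * c * t * (\<mu>1 + \<mu>2) = 0"
    then obtain c where "\<mu>2 * F1 - \<mu>1 * K + 8 * c * (\<mu>1 + \<mu>2) = 0"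
      "\<mu>1 * F2 - \<mu>2 * K / t^2 + 8 * c * t * (\<mu>1 + \<mu>2) = 0"
      by blast
    then show "\<mu>1 * mass_coeff_outer t + \<mu>2 * mass_coeff_inner t = 0"
      using elimination[of c] by simp
  next
    assume relation: "\<mu>1 * mass_coeff_outer t + \<mu>2 * mass_coeff_inner t = 0"
    have "\<mu>1 + \<mu>2 \<noteq> 0"
    proof
      assume "\<mu>1 + \<mu>2 = 0"
      then have "\<mu>2 * (mass_coeff_inner t - mass_coeff_outer t) = 0"
        using relation by (simp add: algebra_simps add_eq_0_iff)
      then show False
        using assms(3,4) by simp
    qed
    define c where "c = (\<mu>1 * K - \<mu>2 * F1) / (8 * (\<mu>1 + \<mu>2))"
    have "\<mu>2 * F1 - \<mu>1 * K + 8 * c * (\<mu>1 + \<mu>2) = 0"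
      using \<open>\<mu>1 + \<mu>2 \<noteq> 0\<close> by (simp add: c_def field_simps)
    moreover from this have "\<mu>1 * F2 - \<mu>2 * K / t^2 + 8 * c * t * (\<mu>1 + \<mu>2) = 0"
      using elimination[of c] relation by simp
    ultimately show "\<exists>c. \<mu>2 * F1 - \<mu>1 * K + 8 * c * (\<mu>1 + \<mu>2) = 0 \<and>
      \<mu>1 * F2 - \<mu>2 * K / t^2 + 8 * c * t * (\<mu>1 + \<mu>2) = 0"
      by blast
  qed
qed

theorem theorem10:
  fixes t \<mu>1 \<mu>2 :: real
  assumes "0 < t" and "t < 1" and "\<mu>2 \<noteq> 0"
  shows "central_configuration 16 (nested_cubes t) (nested_masses \<mu>1 \<mu>2)
           \<longleftrightarrow> \<mu>1 / \<mu>2 = mass_ratio t"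
proof -
  have a: "mass_coeff_outer t < 0" and ab: "mass_coeff_outer t < mass_coeff_inner t"
    and f: "force_on_outer t + cube_self_force < 0"
    using assms mass_coeff_outer_neg mass_coeff_outer_lt_mass_coeff_inner
      force_on_outer_plus_self_neg by auto
  have "central_configuration 16 (nested_cubes t) (nested_masses \<mu>1 \<mu>2) \<longleftrightarrow>
      \<mu>1 * mass_coeff_outer t + \<mu>2 * mass_coeff_inner t = 0"
    using assms ab by (intro nested_cubes_central_iff_mass_relation) simp_all
  also have "\<dots> \<longleftrightarrow> \<mu>1 / \<mu>2 = - mass_coeff_inner t / mass_coeff_outer t"
    using assms(3) a by (simp add: field_simps eq_neg_iff_add_eq_0)
  also have "- mass_coeff_inner t / mass_coeff_outer t = mass_ratio t"
    using assms a ab f by (intro mass_ratio_eq[symmetric]) simp_all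
  finally show ?thesis .
qed

end
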